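(* Let $\lambda>0$, $\mathbf a>0$. For $y\in\mathbb R$ define $\mathscr H_\lambda(y)=\int_0^{\mathbf a}\big(u-\lambda\ln G(u,1-y)\big)G(u,1-y)\,du$. Then $\mathscr H_\lambda$ is increasing on $(-\infty,0]$ and decreasing on $[0,\infty)$, so that $\max_{y\in\mathbb R}\mathscr H_\lambda(y)=\mathscr H_\lambda(0)=f_\lambda(0)=\lambda\ln\big(\lambda(e^{\mathbf a/\lambda}-1)\big)$. In particular this maximum is positive if $\mathbf a>\lambda\ln(1+1/\lambda)$, zero if $\mathbf a=\lambda\ln(1+1/\lambda)$ and negative if $\mathbf a<\lambda\ln(1+1/\lambda)$.
   Context: Gibbs density: for $u\in[0,\mathbf a]$, $s\in\mathbb R$, $G(u,s)=\frac{s\,e^{us/\lambda}}{\lambda(e^{\mathbf a s/\lambda}-1)}$ if $s\neq0$ and $G(u,0)=1/\mathbf a$. $f_\lambda(y)=\lambda\ln\frac{\lambda(e^{\mathbf a(1-y)/\lambda}-1)}{1-y}$ for $y\neq 1$, $f_\lambda(1)=\lambda\ln\mathbf a$. *)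

theory Defs
  imports "HOL-Analysis.Analysis"
begin

definition gibbsG :: "real \<Rightarrow> real \<Rightarrow> real \<Rightarrow> real \<Rightarrow> real" where
  "gibbsG lam a u s =
     (if s \<noteq> 0 then s * exp (u * s / lam) / (lam * (exp (a * s / lam) - 1)) else 1 / a)"

definition f_lam :: "real \<Rightarrow> real \<Rightarrow> real \<Rightarrow> real" where
  "f_lam lam a y =
     (if y \<noteq> 1 then lam * ln (lam * (exp (a * (1 - y) / lam) - 1) / (1 - y)) else lam * ln a)"

definition H_lam :: "real \<Rightarrow> real \<Rightarrow> real \<Rightarrow> real" where
  "H_lam lam a y =
     integral {0..a} (\<lambda>u. (u - lam * ln (gibbsG lam a u (1 - y))) * gibbsG lam a u (1 - y))"

end

theory Submission
  imports Defs
begin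

text \<open>Write M_k(t) for the integral of u^k exp(t u) over [0, a]. The Gibbs density is
  G(u, s) = exp(s u / lam) / M_0(s / lam), so H(y) = y M_1/M_0 + lam ln M_0 evaluated at
  t = (1 - y) / lam. Since M_k' = M_(k+1), the terms coming from (ln M_0)' = M_1/M_0 cancel and
  H'(y) = -(y / lam) (M_2 M_0 - M_1^2) / M_0^2, where the bracket is M_0^2 times the variance of
  the Gibbs density, hence positive. So H peaks at 0, with H(0) = lam ln M_0(1 / lam) =
  lam ln (lam (exp(a / lam) - 1)); this is strictly increasing in a and vanishes exactly at
  a = lam ln (1 + 1 / lam).\<close>

definition exp_moment :: "real \<Rightarrow> real \<Rightarrow> nat \<Rightarrow> real \<Rightarrow> real" where
  "exp_moment b c k t = integral {b..c} (\<lambda>u. u ^ k * exp (t * u))"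

lemma exp_moment_integrable: "(\<lambda>u::real. u ^ k * exp (t * u)) integrable_on {b..c}"
  by (rule integrable_continuous_interval) (intro continuous_intros)

lemma exp_moment_has_real_derivative:
  "(exp_moment b c k has_real_derivative exp_moment b c (Suc k) t) (at t)"
proof -
  have "((\<lambda>t. integral (cbox b c) (\<lambda>u. u ^ k * exp (t * u))) has_real_derivative
        integral (cbox b c) (\<lambda>u. u ^ Suc k * exp (t * u))) (at t within UNIV)"
  proof (rule leibniz_rule_field_derivative)
    show "((\<lambda>t. u ^ k * exp (t * u)) has_real_derivative u ^ Suc k * exp (t * u)) (at t within UNIV)"
      for t u :: real
      by (auto intro!: derivative_eq_intros)
    show "continuous_on (UNIV \<times> cbox b c) (\<lambda>(t, u). u ^ Suc k * exp (t * u))"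
      unfolding case_prod_beta by (intro continuous_intros)
  qed (use exp_moment_integrable in \<open>auto simp: cbox_interval\<close>)
  then show ?thesis
    by (simp add: exp_moment_def[abs_def] cbox_interval)
qed

lemma exp_moment_has_real_derivative_chain [derivative_intros]:
  "(f has_real_derivative f') (at x within S) \<Longrightarrow>
    ((\<lambda>x. exp_moment b c k (f x)) has_real_derivative exp_moment b c (Suc k) (f x) * f') (at x within S)"
  by (rule DERIV_chain2[OF exp_moment_has_real_derivative])

lemma exp_moment_zero_at_zero: "b \<le> c \<Longrightarrow> exp_moment b c 0 0 = c - b"
  by (simp add: exp_moment_def)

lemma exp_moment_zero_closed_form:
  assumes "b \<le> c" "t \<noteq> 0"
  shows "exp_moment b c 0 t = (exp (t * c) - exp (t * b)) / t"
proof -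
  have "((\<lambda>u. exp (t * u)) has_integral exp (t * c) / t - exp (t * b) / t) {b..c}"
  proof (rule fundamental_theorem_of_calculus)
    show "((\<lambda>u. exp (t * u) / t) has_vector_derivative exp (t * u)) (at u within {b..c})" for u
      unfolding has_real_derivative_iff_has_vector_derivative[symmetric]
      using assms by (auto intro!: derivative_eq_intros)
  qed (use assms in auto)
  then show ?thesis
    by (simp add: exp_moment_def integral_unique diff_divide_distrib)
qed

lemma exp_moment_zero_pos:
  assumes "b < c"
  shows "0 < exp_moment b c 0 t"
proof -
  have "integral {b..c} (\<lambda>_. 0) < integral {b..c} (\<lambda>u. exp (t * u))"
    by (rule integral_less_real) (use assms in \<open>auto intro!: continuous_intros\<close>)
  then show ?thesis
    by (simp add: exp_moment_def)
qed

lemma exp_moment_variance_pos: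
  assumes "b < c"
  shows "(exp_moment b c 1 t)\<^sup>2 < exp_moment b c 2 t * exp_moment b c 0 t"
proof -
  define M where "M k = exp_moment b c k t" for k
  define m where "m = M 1 / M 0"
  have "M 0 > 0"
    unfolding M_def using exp_moment_zero_pos[OF assms] .
  have split: "(u - m)\<^sup>2 * exp (t * u) =
      u ^ 2 * exp (t * u) - 2 * m * (u ^ 1 * exp (t * u)) + m\<^sup>2 * (u ^ 0 * exp (t * u))" for u
    by (simp add: power2_eq_square algebra_simps)
  have "((\<lambda>u. u ^ k * exp (t * u)) has_integral M k) {b..c}" for k
    unfolding M_def exp_moment_def using exp_moment_integrable by blast
  then have "((\<lambda>u. (u - m)\<^sup>2 * exp (t * u)) has_integral M 2 - 2 * m * M 1 + m\<^sup>2 * M 0) {b..c}"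
    unfolding split by (intro has_integral_add has_integral_diff has_integral_mult_right)
  then have "integral {b..c} (\<lambda>u. (u - m)\<^sup>2 * exp (t * u)) = M 2 - 2 * m * M 1 + m\<^sup>2 * M 0"
    by (rule integral_unique)
  also have "\<dots> = M 2 - (M 1)\<^sup>2 / M 0"
    using \<open>M 0 > 0\<close> by (simp add: m_def field_simps power2_eq_square)
  finally have eq: "integral {b..c} (\<lambda>u. (u - m)\<^sup>2 * exp (t * u)) = M 2 - (M 1)\<^sup>2 / M 0" .
  have cont: "continuous_on {b..c} (\<lambda>u. (u - m)\<^sup>2 * exp (t * u))"
    by (intro continuous_intros)
  have "\<exists>u\<in>{b..c}. (u - m)\<^sup>2 * exp (t * u) \<noteq> 0"
    using assms by (cases "b = m") (auto intro: bexI[of _ c] bexI[of _ b])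
  then have "integral {b..c} (\<lambda>u. (u - m)\<^sup>2 * exp (t * u)) \<noteq> 0"
    using integral_eq_0_iff[OF cont assms] by auto
  moreover have "integral {b..c} (\<lambda>u. (u - m)\<^sup>2 * exp (t * u)) \<ge> 0"
    using cont by (intro integral_nonneg integrable_continuous_interval) auto
  ultimately have "0 < M 2 - (M 1)\<^sup>2 / M 0"
    using eq by linarith
  then show ?thesis
    using \<open>M 0 > 0\<close> by (simp add: M_def field_simps)
qed

lemma gibbsG_eq_exp_moment:
  assumes "lam > 0" "a > 0"
  shows "gibbsG lam a u s = exp (s / lam * u) / exp_moment 0 a 0 (s / lam)"
proof (cases "s = 0")
  case True
  then show ?thesis
    using assms by (simp add: gibbsG_def exp_moment_zero_at_zero)
next
  case False
  then show ?thesis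
    using assms by (simp add: gibbsG_def exp_moment_zero_closed_form field_simps)
qed

lemma H_lam_eq_exp_moments:
  fixes lam a y :: real
  assumes "lam > 0" "a > 0"
  defines "M k \<equiv> exp_moment 0 a k ((1 - y) / lam)"
  shows "H_lam lam a y = y * M 1 / M 0 + lam * ln (M 0)"
proof -
  define t where "t = (1 - y) / lam"
  have "M 0 > 0"
    unfolding M_def using exp_moment_zero_pos assms by simp
  have G: "gibbsG lam a u (1 - y) = exp (t * u) / M 0" for u
    using gibbsG_eq_exp_moment[OF assms(1,2)] by (simp add: M_def t_def)
  have "(u - lam * ln (gibbsG lam a u (1 - y))) * gibbsG lam a u (1 - y)
      = y / M 0 * (u ^ 1 * exp (t * u)) + lam * ln (M 0) / M 0 * (u ^ 0 * exp (t * u))" for u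
    using assms \<open>M 0 > 0\<close> by (simp add: G ln_div t_def field_simps)
  moreover have "((\<lambda>u. u ^ k * exp (t * u)) has_integral M k) {0..a}" for k
    unfolding M_def exp_moment_def t_def using exp_moment_integrable by blast
  ultimately have "((\<lambda>u. (u - lam * ln (gibbsG lam a u (1 - y))) * gibbsG lam a u (1 - y))
      has_integral y / M 0 * M 1 + lam * ln (M 0) / M 0 * M 0) {0..a}"
    by (simp only:) (intro has_integral_add has_integral_mult_right)
  then show ?thesis
    using \<open>M 0 > 0\<close> by (simp add: H_lam_def integral_unique)
qed

lemma H_lam_has_real_derivative:
  fixes lam a y :: real
  assumes "lam > 0" "a > 0"
  defines "M k \<equiv> exp_moment 0 a k ((1 - y) / lam)"
  shows "(H_lam lam a has_real_derivative - y * (M 2 * M 0 - (M 1)\<^sup>2) / (lam * (M 0)\<^sup>2)) (at y)"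
proof -
  have "M 0 > 0"
    unfolding M_def using exp_moment_zero_pos assms by simp
  have "H_lam lam a = (\<lambda>y. y * exp_moment 0 a 1 ((1 - y) / lam) / exp_moment 0 a 0 ((1 - y) / lam)
      + lam * ln (exp_moment 0 a 0 ((1 - y) / lam)))"
    using H_lam_eq_exp_moments[OF assms(1,2)] by auto
  moreover have "exp_moment 0 a 2 = exp_moment 0 a (Suc (Suc 0))"
    by (simp add: numeral_2_eq_2)
  ultimately show ?thesis
    using assms(1) \<open>M 0 > 0\<close> unfolding M_def
    by (auto intro!: derivative_eq_intros simp: field_simps power2_eq_square)
qed

lemma H_lam_has_real_derivative_scaled:
  fixes lam a y :: real
  assumes "lam > 0" "a > 0"
  obtains V where "V > 0" and "(H_lam lam a has_real_derivative - y * V) (at y)"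
proof
  define M where "M k = exp_moment 0 a k ((1 - y) / lam)" for k
  have "M 0 > 0" "(M 1)\<^sup>2 < M 2 * M 0"
    unfolding M_def using exp_moment_zero_pos exp_moment_variance_pos assms by simp_all
  then show "(M 2 * M 0 - (M 1)\<^sup>2) / (lam * (M 0)\<^sup>2) > 0"
    using assms by simp
  show "(H_lam lam a has_real_derivative - y * ((M 2 * M 0 - (M 1)\<^sup>2) / (lam * (M 0)\<^sup>2))) (at y)"
    using H_lam_has_real_derivative[OF assms, of y] by (simp add: M_def)
qed

lemma H_lam_continuous_on:
  assumes "lam > 0" "a > 0"
  shows "continuous_on S (H_lam lam a)"
  by (metis H_lam_has_real_derivative_scaled[OF assms] DERIV_isCont continuous_at_imp_continuous_on)

lemma H_lam_strict_mono_on_nonpos: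
  assumes "lam > 0" "a > 0"
  shows "strict_mono_on {..0} (H_lam lam a)"
proof (rule strict_mono_onI)
  fix x y :: real
  assume "y \<in> {..0}" "x < y"
  show "H_lam lam a x < H_lam lam a y"
  proof (rule DERIV_pos_imp_increasing_open[OF \<open>x < y\<close> _ H_lam_continuous_on[OF assms]])
    fix z assume "z < y"
    obtain V where "V > 0" "(H_lam lam a has_real_derivative - z * V) (at z)"
      using H_lam_has_real_derivative_scaled[OF assms] .
    then show "\<exists>D. (H_lam lam a has_real_derivative D) (at z) \<and> D > 0"
      using \<open>z < y\<close> \<open>y \<in> {..0}\<close> by (intro exI[of _ "- z * V"]) (simp add: mult_neg_pos)
  qed
qed

lemma H_lam_strict_antimono_on_nonneg:
  assumes "lam > 0" "a > 0"
  shows "strict_antimono_on {0..} (H_lam lam a)"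
proof (rule monotone_onI)
  fix x y :: real
  assume "x \<in> {0..}" "x < y"
  show "H_lam lam a y < H_lam lam a x"
  proof (rule DERIV_neg_imp_decreasing_open[OF \<open>x < y\<close> _ H_lam_continuous_on[OF assms]])
    fix z assume "x < z"
    obtain V where "V > 0" "(H_lam lam a has_real_derivative - z * V) (at z)"
      using H_lam_has_real_derivative_scaled[OF assms] .
    then show "\<exists>D. (H_lam lam a has_real_derivative D) (at z) \<and> D < 0"
      using \<open>x < z\<close> \<open>x \<in> {0..}\<close> by (intro exI[of _ "- z * V"]) simp
  qed
qed

lemma H_lam_zero:
  assumes "lam > 0" "a > 0"
  shows "H_lam lam a 0 = lam * ln (lam * (exp (a / lam) - 1))"
  using assms by (simp add: H_lam_eq_exp_moments exp_moment_zero_closed_form)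

lemma strict_mono_on_ln_scaled_exp_minus_one:
  fixes lam :: real
  assumes "lam > 0"
  shows "strict_mono_on {0<..} (\<lambda>a. lam * ln (lam * (exp (a / lam) - 1)))"
proof (rule strict_mono_onI)
  fix a b :: real
  assume "a \<in> {0<..}" "a < b"
  then have "0 < lam * (exp (a / lam) - 1)" "lam * (exp (a / lam) - 1) < lam * (exp (b / lam) - 1)"
    using assms by (simp_all add: divide_strict_right_mono)
  then have "ln (lam * (exp (a / lam) - 1)) < ln (lam * (exp (b / lam) - 1))"
    by (metis ln_less_cancel_iff order.strict_trans)
  then show "lam * ln (lam * (exp (a / lam) - 1)) < lam * ln (lam * (exp (b / lam) - 1))"
    using assms by simp
qed

theorem mainTheorem5:
  fixes lam a :: real
  assumes "lam > 0" and "a > 0"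
  shows "(\<forall>x y. x < y \<and> y \<le> 0 \<longrightarrow> H_lam lam a x < H_lam lam a y)
       \<and> (\<forall>x y. 0 \<le> x \<and> x < y \<longrightarrow> H_lam lam a y < H_lam lam a x)
       \<and> (\<forall>y. H_lam lam a y \<le> H_lam lam a 0)
       \<and> H_lam lam a 0 = f_lam lam a 0
       \<and> f_lam lam a 0 = lam * ln (lam * (exp (a / lam) - 1))
       \<and> (a > lam * ln (1 + 1 / lam) \<longrightarrow> H_lam lam a 0 > 0)
       \<and> (a = lam * ln (1 + 1 / lam) \<longrightarrow> H_lam lam a 0 = 0)
       \<and> (a < lam * ln (1 + 1 / lam) \<longrightarrow> H_lam lam a 0 < 0)"
proof -
  note inc = strict_mono_onD[OF H_lam_strict_mono_on_nonpos[OF assms]]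
  note dec = monotone_onD[OF H_lam_strict_antimono_on_nonneg[OF assms]]
  have max: "H_lam lam a y \<le> H_lam lam a 0" for y
    using inc[of y 0] dec[of 0 y] by (cases y "0::real" rule: linorder_cases) auto
  define g where "g x = lam * ln (lam * (exp (x / lam) - 1))" for x
  define a\<^sub>0 where "a\<^sub>0 = lam * ln (1 + 1 / lam)"
  have "1 < 1 + 1 / lam"
    using \<open>lam > 0\<close> by simp
  then have "a\<^sub>0 > 0" and "exp (a\<^sub>0 / lam) = 1 + 1 / lam"
    using \<open>lam > 0\<close> by (simp_all add: a\<^sub>0_def ln_gt_zero add_pos_pos)
  then have "a\<^sub>0 > 0" and "g a\<^sub>0 = 0"
    using \<open>lam > 0\<close> by (simp_all add: g_def)
  moreover note strict_mono_onD[OF strict_mono_on_ln_scaled_exp_minus_one[OF \<open>lam > 0\<close>]]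
  ultimately have "(a\<^sub>0 < a \<longrightarrow> 0 < g a) \<and> (a = a\<^sub>0 \<longrightarrow> g a = 0) \<and> (a < a\<^sub>0 \<longrightarrow> g a < 0)"
    using \<open>a > 0\<close> unfolding g_def by (metis greaterThan_iff)
  then show ?thesis
    using inc dec max H_lam_zero[OF assms] unfolding a\<^sub>0_def g_def by (auto simp: f_lam_def)
qed

end
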